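(* Let $q$ be a power of a prime $p$, let $n \geq 2$, let $\zeta$ be a primitive element of $\mathbb{F}_{q^n}$ and let $w \in \{0,1,\ldots,n\}$. If $q = 2$, further assume that $w \neq n$. Then $$\sigma_w(\zeta^k) = \mathcal{F}_\zeta[\delta_w](k) \quad \text{for all } k \in \mathbb{Z}_{q^n-1}.$$
   Context: For $0 \le w \le n$, $\sigma_w : \mathbb{F}_{q^n} \to \mathbb{F}_q$ is defined by $\sigma_0(\xi) = 1$ and, for $1 \le w \le n$, $\sigma_w(\xi) = \sum_{0 \le i_1 < \cdots < i_w \le n-1} \xi^{q^{i_1} + \cdots + q^{i_w}}$ (so that the characteristic polynomial of $\xi$ over $\mathbb{F}_q$ is $\prod_{k=0}^{n-1}(x - \xi^{q^k}) = \sum_{w=0}^n (-1)^w \sigma_w(\xi) x^{n-w}$). Define $\Omega(0) = \{0\} \subseteq \mathbb{Z}_{q^n-1}$ and, for $1 \le w \le n$, $\Omega(w)$ is the set of $k \in \mathbb{Z}_{q^n-1}$ whose canonical representative in $\{0,1,\ldots,q^n-2\}$ equals $q^{i_1} + \cdots + q^{i_w}$ for some integers $0 \le i_1 < \cdots < i_w \le n-1$. Then $\delta_w : \mathbb{Z}_{q^n-1} \to \{0,1\} \subseteq \mathbb{F}_p$ is the indicator function of $\Omega(w)$. For $N \mid q^n-1$, a primitive $N$-th root of unity $\zeta_N \in \mathbb{F}_{q^n}$, and $f : \mathbb{Z}_N \to \mathbb{F}_{q^n}$, the discrete Fourier transform is $\mathcal{F}_{\zeta_N}[f](i) = \sum_{j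 \in \mathbb{Z}_N} f(j)\zeta_N^{ij}$; here $N = q^n-1$ and $\zeta_N = \zeta$. *)

theory Defs
  imports "HOL-Computational_Algebra.Primes"
begin

text \<open>The finite field F_{q^n} is modelled by a finite field type 'a with CARD('a) = q^n.
  Elements of Z_{q^n-1} are represented by their canonical representatives in {0..<q^n-1}.\<close>

definition sigma_w :: "nat \<Rightarrow> nat \<Rightarrow> nat \<Rightarrow> 'a::field \<Rightarrow> 'a" where
  "sigma_w q n w \<xi> = (\<Sum>S\<in>{S. S \<subseteq> {..<n} \<and> card S = w}. \<xi> ^ (\<Sum>i\<in>S. q ^ i))"

definition Omega :: "nat \<Rightarrow> nat \<Rightarrow> nat \<Rightarrow> nat set" where
  "Omega q n w = (if w = 0 then {0} else
     {k. k < q ^ n - 1 \<and> (\<exists>S. S \<subseteq> {..<n} \<and> card S = w \<and> k = (\<Sum>i\<in>S. q ^ i))})"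

definition delta_w :: "nat \<Rightarrow> nat \<Rightarrow> nat \<Rightarrow> nat \<Rightarrow> 'a::field" where
  "delta_w q n w k = (if k \<in> Omega q n w then 1 else 0)"

definition dft :: "'a::field \<Rightarrow> nat \<Rightarrow> (nat \<Rightarrow> 'a) \<Rightarrow> nat \<Rightarrow> 'a" where
  "dft zeta N f i = (\<Sum>j<N. f j * zeta ^ (i * j))"

definition primitive_element :: "'a::{field,finite} \<Rightarrow> bool" where
  "primitive_element \<zeta> \<longleftrightarrow> \<zeta> \<noteq> 0 \<and> (\<forall>x. x \<noteq> 0 \<longrightarrow> (\<exists>k::nat. x = \<zeta> ^ k))"

end

theory Submission
  imports Defs
begin

text \<open>Expanding \<open>\<sigma>_w(\<zeta>^k)\<close> gives the sum of \<open>\<zeta>^(k j)\<close> over \<open>j = \<Sum>i\<in>S. q^i\<close>, with \<open>S\<close>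
  ranging over the \<open>w\<close>-subsets of \<open>{0..n-1}\<close>; so the identity says that \<open>S \<mapsto> \<Sum>i\<in>S. q^i\<close> is a
  bijection onto \<open>\<Omega>(w)\<close>. Injectivity is uniqueness of base-\<open>q\<close> digits. Surjectivity needs these
  sums to be canonical representatives, i.e. below \<open>q^n - 1\<close>: this fails only for the full set with
  \<open>q = 2\<close>, whose sum is \<open>2^n - 1 \<equiv> 0\<close>, while for \<open>q \<ge> 3\<close> the full set gives \<open>(q^n - 1)/(q - 1)\<close>.\<close>

lemma sum_powers_lessThan_mult_pred:
  assumes "(q::nat) \<ge> 1"
  shows "(\<Sum>i<n. q ^ i) * (q - 1) = q ^ n - 1"
proof -
  have "int ((\<Sum>i<n. q ^ i) * (q - 1)) = int (q ^ n - 1)"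
    using assms power_diff_1_eq[of "int q" n] by (simp add: of_nat_diff mult.commute)
  then show ?thesis by (simp only: of_nat_eq_iff)
qed

lemma sum_powers_lessThan_less:
  assumes "(q::nat) \<ge> 2"
  shows "(\<Sum>i<n. q ^ i) < q ^ n"
proof -
  have "(\<Sum>i<n. q ^ i) \<le> (\<Sum>i<n. q ^ i) * (q - 1)"
    using assms mult_le_mono2[of 1 "q - 1" "\<Sum>i<n. q ^ i"] by linarith
  also have "\<dots> = q ^ n - 1"
    using assms by (intro sum_powers_lessThan_mult_pred) simp
  also have "\<dots> < q ^ n"
    using assms by simp
  finally show ?thesis .
qed

lemma sum_powers_subset_less:
  assumes "(q::nat) \<ge> 2" and "S \<subseteq> {..<n}"
  shows "(\<Sum>i\<in>S. q ^ i) < q ^ n"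
proof -
  have "(\<Sum>i\<in>S. q ^ i) \<le> (\<Sum>i<n. q ^ i)"
    using assms(2) by (intro sum_mono2) auto
  with sum_powers_lessThan_less[OF assms(1), of n] show ?thesis
    by linarith
qed

lemma sum_powers_split_top:
  assumes "S \<subseteq> {..<Suc n}"
  shows "(\<Sum>i\<in>S. (q::nat) ^ i) = of_bool (n \<in> S) * q ^ n + (\<Sum>i\<in>S - {n}. q ^ i)"
proof -
  have "finite S"
    using assms finite_subset by blast
  then show ?thesis
    by (cases "n \<in> S") (simp_all add: sum.remove)
qed

lemma
  assumes "(q::nat) \<ge> 2" and "S \<subseteq> {..<Suc n}"
  shows sum_powers_div_top: "(\<Sum>i\<in>S. q ^ i) div q ^ n = of_bool (n \<in> S)"
    and sum_powers_mod_top: "(\<Sum>i\<in>S. q ^ i) mod q ^ n = (\<Sum>i\<in>S - {n}. q ^ i)"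
proof -
  have low: "(\<Sum>i\<in>S - {n}. q ^ i) < q ^ n"
    using assms by (intro sum_powers_subset_less) (auto simp: less_Suc_eq)
  show "(\<Sum>i\<in>S. q ^ i) div q ^ n = of_bool (n \<in> S)"
    using low assms(1) by (simp add: sum_powers_split_top[OF assms(2)] div_add1_eq)
  show "(\<Sum>i\<in>S. q ^ i) mod q ^ n = (\<Sum>i\<in>S - {n}. q ^ i)"
    using low by (simp add: sum_powers_split_top[OF assms(2)])
qed

lemma inj_on_sum_powers:
  assumes "(q::nat) \<ge> 2"
  shows "inj_on (\<lambda>S. \<Sum>i\<in>S. q ^ i) (Pow {..<n})"
proof (induction n)
  case 0
  then show ?case by simp
next
  case (Suc n)
  show ?case
  proof (rule inj_onI)
    fix S T
    assume S: "S \<in> Pow {..<Suc n}" and T: "T \<in> Pow {..<Suc n}"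
      and eq: "(\<Sum>i\<in>S. q ^ i) = (\<Sum>i\<in>T. q ^ i)"
    have "(n \<in> S) = (n \<in> T)"
      using eq sum_powers_div_top[OF assms, of S n] sum_powers_div_top[OF assms, of T n] S T
      by (simp add: of_bool_eq_iff)
    moreover have "S - {n} = T - {n}"
    proof (rule inj_onD[OF Suc.IH])
      show "(\<Sum>i\<in>S - {n}. q ^ i) = (\<Sum>i\<in>T - {n}. q ^ i)"
        using eq sum_powers_mod_top[OF assms, of S n] sum_powers_mod_top[OF assms, of T n] S T
        by simp
      show "S - {n} \<in> Pow {..<n}" "T - {n} \<in> Pow {..<n}"
        using S T by (auto simp: less_Suc_eq)
    qed
    ultimately show "S = T"
      by blast
  qed
qed

lemma sum_powers_less_pow_minus_1:
  assumes q: "(q::nat) \<ge> 2" and S: "S \<subseteq> {..<n}" and "n \<ge> 1"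
    and not_binary_full: "\<not> (q = 2 \<and> S = {..<n})"
  shows "(\<Sum>i\<in>S. q ^ i) < q ^ n - 1"
proof (cases "S = {..<n}")
  case False
  then obtain j where j: "j < n" "j \<notin> S"
    using S by blast
  have "(\<Sum>i\<in>S. q ^ i) + q ^ j = (\<Sum>i\<in>insert j S. q ^ i)"
    using j S finite_subset by (subst sum.insert) auto
  also have "\<dots> < q ^ n"
    using j S by (intro sum_powers_subset_less[OF q]) auto
  moreover have "q ^ j \<ge> 1"
    using q by simp
  ultimately show ?thesis
    by linarith
next
  case True
  then have "q - 1 \<ge> 2"
    using q not_binary_full by auto
  moreover have "(\<Sum>i<n. q ^ i) \<ge> 1"
    using \<open>n \<ge> 1\<close> member_le_sum[of 0 "{..<n}" "\<lambda>i. q ^ i"] by simp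
  ultimately have "(\<Sum>i<n. q ^ i) < (\<Sum>i<n. q ^ i) * (q - 1)"
    using mult_less_mono2[of 1 "q - 1" "\<Sum>i<n. q ^ i"] by simp
  also have "\<dots> = q ^ n - 1"
    using q by (intro sum_powers_lessThan_mult_pred) simp
  finally show ?thesis
    using True by simp
qed

lemma Omega_eq_image_digit_sets:
  assumes "(q::nat) \<ge> 2" and "n \<ge> 1" and "q = 2 \<longrightarrow> w \<noteq> n"
  shows "Omega q n w = (\<lambda>S. \<Sum>i\<in>S. q ^ i) ` {S. S \<subseteq> {..<n} \<and> card S = w}"
proof (cases "w = 0")
  case True
  then have "{S. S \<subseteq> {..<n} \<and> card S = w} = {{}}"
    by (auto simp: card_eq_0_iff finite_subset)
  then show ?thesis
    using True by (simp add: Omega_def)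
next
  case False
  have "(\<Sum>i\<in>S. q ^ i) < q ^ n - 1" if "S \<subseteq> {..<n}" "card S = w" for S
    using that assms by (intro sum_powers_less_pow_minus_1) auto
  then show ?thesis
    using False by (auto simp: Omega_def)
qed

lemma Omega_subset_lessThan:
  assumes "(q::nat) \<ge> 2" and "n \<ge> 1"
  shows "Omega q n w \<subseteq> {..<q ^ n - 1}"
proof -
  have "q ^ 1 \<le> q ^ n"
    using assms by (intro power_increasing) auto
  then show ?thesis
    using assms by (auto simp: Omega_def)
qed

lemma sigma_w_eq_sum_Omega:
  assumes "(q::nat) \<ge> 2" and "n \<ge> 1" and "q = 2 \<longrightarrow> w \<noteq> n"
  shows "sigma_w q n w \<xi> = (\<Sum>j\<in>Omega q n w. \<xi> ^ j)"
proof -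
  have "inj_on (\<lambda>S. \<Sum>i\<in>S. q ^ i) {S. S \<subseteq> {..<n} \<and> card S = w}"
    using inj_on_sum_powers[OF assms(1), of n] by (rule inj_on_subset) auto
  then show ?thesis
    unfolding sigma_w_def Omega_eq_image_digit_sets[OF assms] by (simp add: sum.reindex)
qed

lemma dft_indicator:
  assumes "A \<subseteq> {..<N}"
  shows "dft \<zeta> N (\<lambda>j. if j \<in> A then 1 else 0) i = (\<Sum>j\<in>A. \<zeta> ^ (i * j))"
proof -
  have "dft \<zeta> N (\<lambda>j. if j \<in> A then 1 else 0) i = (\<Sum>j\<in>{..<N} \<inter> A. \<zeta> ^ (i * j))"
    unfolding dft_def by (simp add: sum.inter_restrict if_distrib[of "\<lambda>x. x * _"] cong: if_cong)
  also have "{..<N} \<inter> A = A"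
    using assms by blast
  finally show ?thesis .
qed

theorem lemma3p1:
  fixes \<zeta> :: "'a::{field,finite}" and p q n m w :: nat
  assumes "prime p" and "m \<ge> 1" and "q = p ^ m"
    and "card (UNIV :: 'a set) = q ^ n" and "n \<ge> 2"
    and "primitive_element \<zeta>"
    and "w \<le> n" and "q = 2 \<longrightarrow> w \<noteq> n"
  shows "\<forall>k < q ^ n - 1. sigma_w q n w (\<zeta> ^ k) = dft \<zeta> (q ^ n - 1) (delta_w q n w) k"
proof (intro allI impI)
  fix k
  have p: "p \<ge> 2"
    using assms(1) prime_ge_2_nat by blast
  have "p ^ 1 \<le> p ^ m"
    using p assms(2) by (intro power_increasing) auto
  then have q: "q \<ge> 2"
    using p assms(3) by simp
  have n: "n \<ge> 1"
    using assms(5) by simp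
  have "dft \<zeta> (q ^ n - 1) (delta_w q n w) k = (\<Sum>j\<in>Omega q n w. \<zeta> ^ (k * j))"
    unfolding delta_w_def[abs_def] by (rule dft_indicator[OF Omega_subset_lessThan[OF q n]])
  also have "\<dots> = sigma_w q n w (\<zeta> ^ k)"
    by (simp add: sigma_w_eq_sum_Omega[OF q n assms(8)] power_mult)
  finally show "sigma_w q n w (\<zeta> ^ k) = dft \<zeta> (q ^ n - 1) (delta_w q n w) k"
    by simp
qed

end
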